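(* If $\varepsilon$ is sufficiently small (depending only on $g$), then $|\phi|\lesssim\sqrt{\varepsilon}$ on $\mathcal{D}$, with implicit constant depending only on $g$.
   Context: Target $d\rho^2+g(\rho)^2d\theta^2$ with $g$ smooth, odd, $g'(0)=1$, $\int_0^s g\to\infty$ as $s\to\infty$, satisfying the Grillakis condition $sg'(s)+g(s)>0$ for $s>0$; $f=gg'$; $\kappa>0$. In null coordinates $(u,\underline{u})$ with $\mathbf{g}=-\Omega^2du\,d\underline{u}+r^2d\theta^2$, normalized on the axis $\{u=\underline{u}\}$ by $r=0$, $\partial_{\underline{u}}r=1/2$, $\partial_ur=-1/2$, $\Omega=1$, the system reads: $\partial_u(\Omega^{-2}\partial_ur)=-\kappa\Omega^{-2}r(\partial_u\phi)^2$, $\partial_{\underline{u}}(\Omega^{-2}\partial_{\underline{u}}r)=-\kappa\Omega^{-2}r(\partial_{\underline{u}}\phi)^2$, $\partial_u\partial_{\underline{u}}r=\kappa\Omega^2g(\phi)^2/(4r)$, $\Omega^{-2}(\partial_u\Omega\,\partial_{\underline{u}}\Omega-\Omega\partial_u\partial_{\underline{u}}\Omega)=\tfrac{\kappa}{8}\big(4\partial_u\phi\,\partial_{\underline{u}}\phi+\Omega^2g(\phi)^2/r^2\big)$, $\partial_u(r\partial_{\underline{u}}\phi)+\partial_{\underline{u}}(r\partial_u\phi)=-\Omega^2f(\phi)/(2r)$. Let $\tau=(u+\underline{u})/2$, $\varrho=(\underline{u}-u)/2$ and $\mathcal{D}=\{-1\le\tau<0,\ \underline{u}\le0,\ u\le\underline{u}\}$;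 the solution is regular on $\mathcal{D}$, $\phi=0$ on the axis. Flux smallness conditions: (F1) for every $\underline{u}\in[-1,0]$, $\int_{-2-\underline{u}}^{\underline{u}}\big((\partial_u\phi)^2+g(\phi)^2/r^2\big)r\,(u',\underline{u})\,du'\le\varepsilon$; (F2) for every $u\in[-2,0]$, $\int_{\max(u,-2-u)}^{0}\big((\partial_{\underline{u}}\phi)^2+g(\phi)^2/r^2\big)r\,(u,\underline{u}')\,d\underline{u}'\le\varepsilon$; both are assumed. *)

theory Defs
  imports "HOL-Analysis.Analysis"
begin

definition smooth_fun :: "(real \<Rightarrow> real) \<Rightarrow> bool" where
  "smooth_fun g \<longleftrightarrow> (\<forall>n x. ((deriv ^^ n) g) differentiable (at x))"

text \<open>Partial derivatives in null coordinates (u, ub) (ub stands for underline u).\<close>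
definition pu :: "(real \<Rightarrow> real \<Rightarrow> real) \<Rightarrow> real \<Rightarrow> real \<Rightarrow> real" where
  "pu F u ub = deriv (\<lambda>x. F x ub) u"

definition pv :: "(real \<Rightarrow> real \<Rightarrow> real) \<Rightarrow> real \<Rightarrow> real \<Rightarrow> real" where
  "pv F u ub = deriv (\<lambda>y. F u y) ub"

definition C1_on2 :: "(real \<times> real) set \<Rightarrow> (real \<Rightarrow> real \<Rightarrow> real) \<Rightarrow> bool" where
  "C1_on2 U F \<longleftrightarrow>
     continuous_on U (\<lambda>p. F (fst p) (snd p)) \<and>
     continuous_on U (\<lambda>p. pu F (fst p) (snd p)) \<and>
     continuous_on U (\<lambda>p. pv F (fst p) (snd p)) \<and>
     (\<forall>p\<in>U. (\<lambda>x. F x (snd p)) differentiable (at (fst p)) \<and>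
             (\<lambda>y. F (fst p) y) differentiable (at (snd p)))"

definition C2_on2 :: "(real \<times> real) set \<Rightarrow> (real \<Rightarrow> real \<Rightarrow> real) \<Rightarrow> bool" where
  "C2_on2 U F \<longleftrightarrow> C1_on2 U F \<and> C1_on2 U (pu F) \<and> C1_on2 U (pv F)"

definition domD :: "(real \<times> real) set" where
  "domD = {(u, ub). -1 \<le> (u + ub) / 2 \<and> (u + ub) / 2 < 0 \<and> ub \<le> 0 \<and> u \<le> ub}"

definition admissible_target :: "(real \<Rightarrow> real) \<Rightarrow> bool" where
  "admissible_target g \<longleftrightarrow>
     smooth_fun g \<and> (\<forall>s. g (- s) = - g s) \<and> deriv g 0 = 1 \<and>
     filterlim (\<lambda>s. integral {0..s} g) at_top at_top \<and>
     (\<forall>s>0. s * deriv g s + g s > 0)"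

definition regular_solution ::
  "(real \<Rightarrow> real) \<Rightarrow> real \<Rightarrow> (real \<Rightarrow> real \<Rightarrow> real) \<Rightarrow> (real \<Rightarrow> real \<Rightarrow> real)
     \<Rightarrow> (real \<Rightarrow> real \<Rightarrow> real) \<Rightarrow> bool" where
  "regular_solution g \<kappa> r \<Omega> \<phi> \<longleftrightarrow>
     (let f = (\<lambda>s. g s * deriv g s) in
     (\<exists>U. open U \<and> domD \<subseteq> U \<and> C2_on2 U r \<and> C2_on2 U \<Omega> \<and> C2_on2 U \<phi>) \<and>
     (\<forall>(u, ub)\<in>domD. \<Omega> u ub > 0) \<and>
     (\<forall>(u, ub)\<in>domD. u < ub \<longrightarrow> r u ub > 0) \<and>
     (\<forall>(u, ub)\<in>domD. u = ub \<longrightarrow>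
        r u ub = 0 \<and> pv r u ub = 1/2 \<and> pu r u ub = -1/2 \<and> \<Omega> u ub = 1 \<and> \<phi> u ub = 0) \<and>
     (\<forall>(u, ub)\<in>domD. u < ub \<longrightarrow>
        pu (\<lambda>a b. pu r a b / (\<Omega> a b)^2) u ub
          = - \<kappa> * r u ub * (pu \<phi> u ub)^2 / (\<Omega> u ub)^2 \<and>
        pv (\<lambda>a b. pv r a b / (\<Omega> a b)^2) u ub
          = - \<kappa> * r u ub * (pv \<phi> u ub)^2 / (\<Omega> u ub)^2 \<and>
        pu (pv r) u ub = \<kappa> * (\<Omega> u ub)^2 * (g (\<phi> u ub))^2 / (4 * r u ub) \<and>
        (pu \<Omega> u ub * pv \<Omega> u ub - \<Omega> u ub * pu (pv \<Omega>) u ub) / (\<Omega> u ub)^2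
          = \<kappa> / 8 * (4 * pu \<phi> u ub * pv \<phi> u ub
                       + (\<Omega> u ub)^2 * (g (\<phi> u ub))^2 / (r u ub)^2) \<and>
        pu (\<lambda>a b. r a b * pv \<phi> a b) u ub + pv (\<lambda>a b. r a b * pu \<phi> a b) u ub
          = - ((\<Omega> u ub)^2 * f (\<phi> u ub) / (2 * r u ub))))"

definition flux_F1 ::
  "(real \<Rightarrow> real) \<Rightarrow> (real \<Rightarrow> real \<Rightarrow> real) \<Rightarrow> (real \<Rightarrow> real \<Rightarrow> real) \<Rightarrow> real \<Rightarrow> bool" where
  "flux_F1 g r \<phi> \<epsilon> \<longleftrightarrow>
     (\<forall>ub\<in>{-1..0}.
        let h = (\<lambda>u'. ((pu \<phi> u' ub)^2 + (g (\<phi> u' ub))^2 / (r u' ub)^2) * r u' ub) in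
        h integrable_on {-2 - ub..ub} \<and> integral {-2 - ub..ub} h \<le> \<epsilon>)"

definition flux_F2 ::
  "(real \<Rightarrow> real) \<Rightarrow> (real \<Rightarrow> real \<Rightarrow> real) \<Rightarrow> (real \<Rightarrow> real \<Rightarrow> real) \<Rightarrow> real \<Rightarrow> bool" where
  "flux_F2 g r \<phi> \<epsilon> \<longleftrightarrow>
     (\<forall>u\<in>{-2..0}.
        let h = (\<lambda>ub'. ((pv \<phi> u ub')^2 + (g (\<phi> u ub'))^2 / (r u ub')^2) * r u ub') in
        h integrable_on {max u (-2 - u)..0} \<and> integral {max u (-2 - u)..0} h \<le> \<epsilon>)"

end

theory Submission
  imports Defs
begin

text \<open>Let \<open>G\<close> be the even primitive of \<open>g\<close> with \<open>G 0 = 0\<close>. Since \<open>g s \<ge> s/2\<close> near \<open>0\<close> and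
  \<open>g > 0\<close> on \<open>(0,\<infinity>)\<close>, \<open>G s \<ge> min s\<^sup>2 \<delta>\<^sup>2 / 4\<close> for some \<open>\<delta> > 0\<close>. On an outgoing slice
  \<open>ub = const < 0\<close>, \<open>\<phi>\<close> vanishes on the axis, so \<open>G (\<phi> u ub) = - \<integral>\<^sub>u\<^sup>ub g(\<phi>) \<partial>\<^sub>u\<phi>\<close>, and
  Young's inequality bounds the integrand by half the (F1) flux density
  \<open>((\<partial>\<^sub>u\<phi>)\<^sup>2 + g(\<phi>)\<^sup>2/r\<^sup>2) r\<close>. Hence \<open>G (\<phi>) \<le> \<epsilon>/2\<close>, which forces \<open>\<phi>\<^sup>2 \<le> 2\<epsilon>\<close> once
  \<open>\<epsilon> \<le> \<delta>\<^sup>2/4\<close>; the slice \<open>ub = 0\<close> follows by continuity.\<close>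

lemma admissible_target_has_real_derivative:
  assumes "admissible_target g"
  shows "(g has_real_derivative deriv g x) (at x)"
proof -
  have "((deriv ^^ 0) g) differentiable (at x)"
    using assms unfolding admissible_target_def smooth_fun_def by blast
  then show ?thesis by (simp add: DERIV_deriv_iff_real_differentiable)
qed

lemma admissible_target_continuous: "admissible_target g \<Longrightarrow> continuous_on UNIV g"
  by (intro continuous_at_imp_continuous_on ballI DERIV_isCont[OF admissible_target_has_real_derivative])

lemma admissible_target_odd: "admissible_target g \<Longrightarrow> g (- s) = - g s"
  unfolding admissible_target_def by blast

lemma admissible_target_zero: "admissible_target g \<Longrightarrow> g 0 = 0"
  using admissible_target_odd[of g 0] by simp

text \<open>The Grillakis condition says \<open>(s g s)' > 0\<close>.\<close>

lemma admissible_target_pos: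
  assumes g: "admissible_target g" and s: "s > 0"
  shows "g s > 0"
proof -
  have "\<And>x. 0 \<le> x \<Longrightarrow> x \<le> s \<Longrightarrow> ((\<lambda>t. t * g t) has_real_derivative g x + x * deriv g x) (at x)"
    using admissible_target_has_real_derivative[OF g] by (auto intro!: derivative_eq_intros)
  from MVT2[OF s this] obtain z where z: "0 < z" "z < s"
    and mvt: "s * g s - 0 * g 0 = (s - 0) * (g z + z * deriv g z)" by blast
  have "z * deriv g z + g z > 0" using g z(1) unfolding admissible_target_def by blast
  with s mvt have "s * g s > 0" by (simp add: add.commute)
  with s show ?thesis by (simp add: zero_less_mult_iff)
qed

lemma admissible_target_nonneg: "admissible_target g \<Longrightarrow> s \<ge> 0 \<Longrightarrow> g s \<ge> 0"
  using admissible_target_pos[of g s] admissible_target_zero[of g] by (cases "s = 0") auto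

lemma admissible_target_ge_half:
  assumes g: "admissible_target g"
  obtains \<delta> where "\<delta> > 0" "\<And>t. 0 \<le> t \<Longrightarrow> t \<le> \<delta> \<Longrightarrow> g t \<ge> t / 2"
proof -
  have "(g has_real_derivative 1) (at 0)"
    using admissible_target_has_real_derivative[OF g, of 0] g unfolding admissible_target_def by simp
  then have "((\<lambda>y. (g y - g 0) / (y - 0)) \<longlongrightarrow> 1) (at 0)"
    by (simp add: has_field_derivative_iff)
  then have "eventually (\<lambda>y. (g y - g 0) / (y - 0) > 1/2) (at 0)"
    by (rule order_tendstoD) simp
  then obtain e where e: "e > 0"
    and quot: "\<And>y. y \<noteq> 0 \<Longrightarrow> dist y 0 < e \<Longrightarrow> (g y - g 0) / (y - 0) > 1/2"
    unfolding eventually_at by blast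
  show ?thesis
  proof (rule that[of "e/2"])
    fix t :: real assume t: "0 \<le> t" "t \<le> e / 2"
    show "g t \<ge> t / 2"
    proof (cases "t = 0")
      case False
      with quot[of t] t e have "g t / t > 1/2" by (simp add: admissible_target_zero[OF g])
      with False t show ?thesis by (simp add: field_simps)
    qed (simp add: admissible_target_zero[OF g])
  qed (use e in simp)
qed

lemma odd_continuous_has_even_antiderivative:
  fixes g :: "real \<Rightarrow> real"
  assumes cont: "continuous_on UNIV g" and odd: "\<And>x. g (- x) = - g x"
  obtains G where "\<And>x. (G has_real_derivative g x) (at x)" "G 0 = 0" "\<And>x. G (- x) = G x"
proof -
  have "\<exists>F. \<forall>x. (-\<infinity>::ereal) < ereal x \<longrightarrow> ereal x < \<infinity> \<longrightarrow> (F has_vector_derivative g x) (at x)"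
    by (rule einterval_antiderivative) (use cont in \<open>auto simp: continuous_on_eq_continuous_at\<close>)
  then obtain F where F: "\<And>x. (F has_real_derivative g x) (at x)"
    by (auto simp: has_real_derivative_iff_has_vector_derivative)
  define G where "G x = F x - F 0" for x
  have G: "(G has_real_derivative g x) (at x)" for x
    unfolding G_def using F by (auto intro!: derivative_eq_intros)
  have "((\<lambda>y. G (- y) - G y) has_real_derivative 0) (at y)" for y
  proof -
    have "((\<lambda>y. G (- y)) has_real_derivative g (- y) * (- 1)) (at y)"
      by (rule DERIV_chain2[OF G]) (auto intro!: derivative_eq_intros)
    with G[of y] odd[of y] show ?thesis by (auto intro!: derivative_eq_intros)
  qed
  then have "G (- x) - G x = G (- 0) - G 0" for x
    using DERIV_isconst_all by blast
  then show ?thesis using that[of G] G by (simp add: G_def)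
qed

lemma even_antiderivative_lower_bound:
  fixes G g :: "real \<Rightarrow> real"
  assumes G: "\<And>x. (G has_real_derivative g x) (at x)" "G 0 = 0" "\<And>x. G (- x) = G x"
    and nonneg: "\<And>t. t \<ge> 0 \<Longrightarrow> g t \<ge> 0"
    and "\<delta> \<ge> 0" and half: "\<And>t. 0 \<le> t \<Longrightarrow> t \<le> \<delta> \<Longrightarrow> g t \<ge> t / 2"
  shows "G s \<ge> min (s\<^sup>2) (\<delta>\<^sup>2) / 4"
proof -
  have quadratic: "G t \<ge> t\<^sup>2 / 4" if "0 \<le> t" "t \<le> \<delta>" for t
  proof -
    have "(\<lambda>x. G x - x\<^sup>2/4) 0 \<le> (\<lambda>x. G x - x\<^sup>2/4) t"
    proof (rule DERIV_nonneg_imp_nondecreasing[OF that(1)])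
      fix x assume "0 \<le> x" "x \<le> t"
      with G(1)[of x] half[of x] that
      show "\<exists>y. ((\<lambda>x. G x - x\<^sup>2/4) has_real_derivative y) (at x) \<and> y \<ge> 0"
        by (auto intro!: derivative_eq_intros exI[of _ "g x - 2 * x / 4"])
    qed
    with G(2) show ?thesis by simp
  qed
  have mono: "G t1 \<le> G t2" if "0 \<le> t1" "t1 \<le> t2" for t1 t2
    by (rule DERIV_nonneg_imp_nondecreasing[OF that(2)]) (use G(1) nonneg that in force)
  have "G s = G \<bar>s\<bar>" using G(3)[of s] by (cases "s \<ge> 0") auto
  moreover have "G \<bar>s\<bar> \<ge> min (s\<^sup>2) (\<delta>\<^sup>2) / 4"
  proof (cases "\<bar>s\<bar> \<le> \<delta>")
    case True then show ?thesis using quadratic[of "\<bar>s\<bar>"] by simp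
  next
    case False
    then have "\<delta>\<^sup>2 \<le> s\<^sup>2" using power_mono[of \<delta> "\<bar>s\<bar>" 2] \<open>\<delta> \<ge> 0\<close> by simp
    then show ?thesis using False quadratic[of \<delta>] mono[of \<delta> "\<bar>s\<bar>"] \<open>\<delta> \<ge> 0\<close> by simp
  qed
  ultimately show ?thesis by simp
qed

lemma abs_le_sqrt_of_truncated_square_le:
  fixes s \<delta> \<epsilon> :: real
  assumes m: "min (s\<^sup>2) (\<delta>\<^sup>2) / 4 \<le> \<epsilon> / 2" and "\<delta> > 0" and \<epsilon>: "\<epsilon> \<le> \<delta>\<^sup>2 / 4"
  shows "\<bar>s\<bar> \<le> sqrt 2 * sqrt \<epsilon>"
proof -
  have "s\<^sup>2 \<le> 2 * \<epsilon>"
  proof (cases "s\<^sup>2 \<le> \<delta>\<^sup>2")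
    case False
    with m have "\<delta>\<^sup>2 / 4 \<le> \<epsilon> / 2" by (simp add: min_def)
    moreover have "\<delta>\<^sup>2 > 0" using \<open>\<delta> > 0\<close> by simp
    ultimately show ?thesis using \<epsilon> by linarith
  qed (use m in \<open>simp add: min_def\<close>)
  then have "sqrt (s\<^sup>2) \<le> sqrt (2 * \<epsilon>)" by (rule real_sqrt_le_mono)
  then show ?thesis by (simp add: real_sqrt_mult)
qed

lemma neg_mult_le_weighted_sum_squares:
  fixes a b r :: real
  assumes "r > 0"
  shows "- (a * b) \<le> (a\<^sup>2 + b\<^sup>2 / r\<^sup>2) * r / 2"
proof -
  have "- (a * b) = (- 2 * a * b * r) / (2 * r)"
    using assms by simp
  also have "\<dots> \<le> (a\<^sup>2 * r\<^sup>2 + b\<^sup>2) / (2 * r)"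
    using zero_le_power2[of "a * r + b"] assms
    by (intro divide_right_mono) (simp_all add: power2_eq_square algebra_simps)
  also have "\<dots> = (a\<^sup>2 + b\<^sup>2 / r\<^sup>2) * r / 2"
    using assms by (simp add: power2_eq_square field_simps)
  finally show ?thesis .
qed

lemma value_le_integral_of_derivative_bound:
  fixes F f k :: "real \<Rightarrow> real"
  assumes "a \<le> b" and F: "\<And>x. x \<in> {a..b} \<Longrightarrow> (F has_real_derivative f x) (at x)"
    and "F b = 0" and k: "k integrable_on {a..b}" and bound: "\<And>x. x \<in> {a..b} \<Longrightarrow> - f x \<le> k x"
  shows "F a \<le> integral {a..b} k"
proof -
  have "(f has_integral (F b - F a)) {a..b}"
    by (rule fundamental_theorem_of_calculus[OF \<open>a \<le> b\<close>])
       (use F in \<open>auto intro: has_vector_derivative_at_within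
                    simp: has_real_derivative_iff_has_vector_derivative\<close>)
  with \<open>F b = 0\<close> have "(f has_integral - F a) {a..b}" by simp
  from has_integral_neg[OF this] have "((\<lambda>x. - f x) has_integral F a) {a..b}" by simp
  then show ?thesis
    by (rule has_integral_le[OF _ integrable_integral[OF k]]) (use bound in blast)
qed

lemma C1_on2_has_real_derivative_fst:
  assumes "C1_on2 U F" "(x, y) \<in> U"
  shows "((\<lambda>x. F x y) has_real_derivative pu F x y) (at x)"
  using assms unfolding C1_on2_def pu_def by (fastforce simp: DERIV_deriv_iff_real_differentiable)

lemma C1_on2_continuous_on: "C1_on2 U F \<Longrightarrow> continuous_on U (\<lambda>p. F (fst p) (snd p))"
  unfolding C1_on2_def by blast

lemma regular_solution_C1:
  assumes "regular_solution g \<kappa> r \<Omega> \<phi>"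
  obtains U where "open U" "domD \<subseteq> U" "C1_on2 U \<phi>"
  using assms unfolding regular_solution_def Let_def C2_on2_def by blast

lemma regular_solution_r_pos:
  assumes "regular_solution g \<kappa> r \<Omega> \<phi>" "(u, ub) \<in> domD" "u < ub"
  shows "r u ub > 0"
  using assms unfolding regular_solution_def Let_def by fast

lemma regular_solution_axis:
  assumes "regular_solution g \<kappa> r \<Omega> \<phi>" "(u, u) \<in> domD"
  shows "r u u = 0" "\<phi> u u = 0"
  using assms unfolding regular_solution_def Let_def by fast+

lemma flux_F1_slice:
  assumes "flux_F1 g r \<phi> \<epsilon>" "ub \<in> {-1..0}"
  defines "h \<equiv> \<lambda>u'. ((pu \<phi> u' ub)\<^sup>2 + (g (\<phi> u' ub))\<^sup>2 / (r u' ub)\<^sup>2) * r u' ub"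
  shows "h integrable_on {-2 - ub..ub}" "integral {-2 - ub..ub} h \<le> \<epsilon>"
  using assms unfolding flux_F1_def Let_def by blast+

lemma domD_slice_iff:
  assumes "ub < 0"
  shows "(u, ub) \<in> domD \<longleftrightarrow> -1 \<le> ub \<and> u \<in> {-2 - ub..ub}"
  using assms by (auto simp: domD_def)

lemma regular_solution_primitive_le_flux:
  assumes g: "admissible_target g" and G: "\<And>x. (G has_real_derivative g x) (at x)" "G 0 = 0"
    and sol: "regular_solution g \<kappa> r \<Omega> \<phi>" and F1: "flux_F1 g r \<phi> \<epsilon>"
    and D: "(u, ub) \<in> domD" and ub: "ub < 0"
  shows "G (\<phi> u ub) \<le> \<epsilon> / 2"
proof -
  obtain U where U: "domD \<subseteq> U" "C1_on2 U \<phi>"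
    using regular_solution_C1[OF sol] by blast
  define k where "k u' = ((pu \<phi> u' ub)\<^sup>2 + (g (\<phi> u' ub))\<^sup>2 / (r u' ub)\<^sup>2) * r u' ub" for u'
  have slice: "-1 \<le> ub" "-2 - ub \<le> u" "u \<le> ub" and inD: "\<And>x. x \<in> {-2 - ub..ub} \<Longrightarrow> (x, ub) \<in> domD"
    using D ub domD_slice_iff by auto
  have flux: "k integrable_on {-2 - ub..ub}" "integral {-2 - ub..ub} k \<le> \<epsilon>"
    using flux_F1_slice[OF F1] slice ub unfolding k_def by auto
  have axis: "r ub ub = 0" "\<phi> ub ub = 0"
    using regular_solution_axis[OF sol inD] slice by auto
  have k_nonneg: "k x \<ge> 0" if "x \<in> {-2 - ub..ub}" for x
    using regular_solution_r_pos[OF sol inD[OF that]] that axis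
    by (cases "x = ub") (auto simp: k_def)
  have young: "- (g (\<phi> x ub) * pu \<phi> x ub) \<le> k x / 2" if "x \<in> {u..ub}" for x
  proof (cases "x = ub")
    case False
    with that slice have "r x ub > 0" by (intro regular_solution_r_pos[OF sol inD]) auto
    from neg_mult_le_weighted_sum_squares[OF this, of "pu \<phi> x ub" "g (\<phi> x ub)"]
    show ?thesis by (simp add: k_def ac_simps)
  qed (simp add: axis k_def admissible_target_zero[OF g])
  have "G (\<phi> u ub) \<le> integral {u..ub} (\<lambda>x. k x / 2)"
  proof (rule value_le_integral_of_derivative_bound[OF slice(3)])
    fix x assume "x \<in> {u..ub}"
    with slice U have "(x, ub) \<in> U" using inD by auto
    from DERIV_chain2[OF G(1) C1_on2_has_real_derivative_fst[OF U(2) this]]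
    show "((\<lambda>x. G (\<phi> x ub)) has_real_derivative g (\<phi> x ub) * pu \<phi> x ub) (at x)" .
  qed (use young axis G(2) integrable_on_subinterval[OF flux(1), of u ub] slice
         in \<open>auto intro: integrable_on_divide\<close>)
  also have "\<dots> = integral {u..ub} k / 2" by simp
  also have "integral {u..ub} k \<le> integral {-2 - ub..ub} k"
    by (rule integral_subset_le)
       (use slice k_nonneg flux(1) integrable_on_subinterval[OF flux(1), of u ub] in auto)
  finally show ?thesis using flux(2) by linarith
qed

text \<open>Every point \<open>(u, 0)\<close> of \<open>domD\<close> is approached by \<open>(u + s, - s/2)\<close>, \<open>s \<rightarrow> 0\<^sup>+\<close>, inside \<open>domD\<close>.\<close>

lemma domD_bound_extends_to_boundary:
  fixes F :: "real \<Rightarrow> real \<Rightarrow> real"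
  assumes U: "domD \<subseteq> U" "continuous_on U (\<lambda>p. F (fst p) (snd p))" "open U"
    and bound: "\<And>u ub. (u, ub) \<in> domD \<Longrightarrow> ub < 0 \<Longrightarrow> \<bar>F u ub\<bar> \<le> c"
    and D: "(u, ub) \<in> domD"
  shows "\<bar>F u ub\<bar> \<le> c"
proof (cases "ub < 0")
  case False
  then have ub: "ub = 0" and u: "-2 \<le> u" "u < 0" using D by (auto simp: domD_def)
  have "isCont (\<lambda>p. F (fst p) (snd p)) (u, 0)"
    using U D ub by (auto simp: continuous_on_eq_continuous_at)
  moreover have "((\<lambda>s. (u + s, - s / 2)) \<longlongrightarrow> (u, 0)) (at_right 0)"
    by (auto intro!: tendsto_eq_intros)
  ultimately have "((\<lambda>s. F (u + s) (- s / 2)) \<longlongrightarrow> F u 0) (at_right 0)"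
    using isCont_tendsto_compose[where g="\<lambda>p. F (fst p) (snd p)"] by fastforce
  from tendsto_rabs[OF this]
  have lim: "((\<lambda>s. \<bar>F (u + s) (- s / 2)\<bar>) \<longlongrightarrow> \<bar>F u 0\<bar>) (at_right 0)" .
  have "eventually (\<lambda>s. \<bar>F (u + s) (- s / 2)\<bar> \<le> c) (at_right 0)"
    unfolding eventually_at_right_field
    by (rule exI[of _ "- 2 * u / 3"]) (use u in \<open>auto intro!: bound simp: domD_def\<close>)
  from tendsto_upperbound[OF lim this] ub show ?thesis by simp
qed (use bound D in blast)

theorem mainTheorem13:
  fixes g :: "real \<Rightarrow> real"
  assumes "admissible_target g"
  shows "\<exists>\<epsilon>0>0. \<exists>C>0. \<forall>\<kappa> r \<Omega> \<phi> \<epsilon>.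
           \<kappa> > 0 \<longrightarrow> 0 \<le> \<epsilon> \<longrightarrow> \<epsilon> \<le> \<epsilon>0 \<longrightarrow>
           regular_solution g \<kappa> r \<Omega> \<phi> \<longrightarrow>
           flux_F1 g r \<phi> \<epsilon> \<longrightarrow> flux_F2 g r \<phi> \<epsilon> \<longrightarrow>
           (\<forall>(u, ub)\<in>domD. \<bar>\<phi> u ub\<bar> \<le> C * sqrt \<epsilon>)"
proof -
  note g = assms
  obtain G where G: "\<And>x. (G has_real_derivative g x) (at x)" "G 0 = 0" "\<And>x. G (- x) = G x"
    using odd_continuous_has_even_antiderivative admissible_target_continuous[OF g]
      admissible_target_odd[OF g] by metis
  obtain \<delta> where \<delta>: "\<delta> > 0" "\<And>t. 0 \<le> t \<Longrightarrow> t \<le> \<delta> \<Longrightarrow> g t \<ge> t / 2"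
    using admissible_target_ge_half[OF g] by blast
  have G_lower: "G s \<ge> min (s\<^sup>2) (\<delta>\<^sup>2) / 4" for s
    by (rule even_antiderivative_lower_bound[OF G admissible_target_nonneg[OF g] less_imp_le[OF \<delta>(1)] \<delta>(2)])
  have "\<bar>\<phi> u ub\<bar> \<le> sqrt 2 * sqrt \<epsilon>"
    if sol: "regular_solution g \<kappa> r \<Omega> \<phi>" and F1: "flux_F1 g r \<phi> \<epsilon>"
      and \<epsilon>: "\<epsilon> \<le> \<delta>\<^sup>2 / 4" and D: "(u, ub) \<in> domD" for \<kappa> r \<Omega> \<phi> \<epsilon> u ub
  proof -
    obtain U where U: "open U" "domD \<subseteq> U" "C1_on2 U \<phi>"
      using regular_solution_C1[OF sol] by blast
    have "\<bar>\<phi> u' ub'\<bar> \<le> sqrt 2 * sqrt \<epsilon>" if "(u', ub') \<in> domD" "ub' < 0" for u' ub'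
      using order_trans[OF G_lower regular_solution_primitive_le_flux[OF g G(1,2) sol F1 that]]
      by (rule abs_le_sqrt_of_truncated_square_le[OF _ \<delta>(1) \<epsilon>])
    from domD_bound_extends_to_boundary[OF U(2) C1_on2_continuous_on[OF U(3)] U(1) this D]
    show ?thesis .
  qed
  with \<delta>(1) show ?thesis
    by (intro exI[of _ "\<delta>\<^sup>2 / 4"] conjI exI[of _ "sqrt 2"]) auto
qed

end
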